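(* For a quasi-pseudometric space $(X,d)$ the following are equivalent, where for a function $\varphi:X\to\mathbb{R}\cup\{\infty\}$ and $x\in X$ we write $S(x)=\{y\in X:\varphi(y)+d(y,x)\le\varphi(x)\}$: 1. $(X,d)$ is sequentially right $K$-complete. 2. For every proper bounded below nearly lower semicontinuous function $\varphi:X\to\mathbb{R}\cup\{\infty\}$ there exists $z\in X$ such that $\varphi(x)=\varphi(z)$ for all $x\in S(z)$. 3. Every proper bounded below nearly lower semicontinuous function $\varphi:X\to\mathbb{R}\cup\{\infty\}$ such that for every $x\in X$ with $\varphi(x)>\inf\varphi(X)$ there exists $y\in S(x)$ with $\varphi(y)<\varphi(x)$, attains its minimum on $X$. 4. For every proper bounded below nearly lower semicontinuous function $\varphi:X\to\mathbb{R}\cup\{\infty\}$ and every mapping $T:X\to X$ with $Tx\in S(x)$ for all $x\in X$, there exists $z\in X$ with $\varphi(Tz)=\varphi(z)$.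
   Context: A quasi-pseudometric on $X$ is $d:X\times X\to[0,\infty)$ with $d(x,x)=0$ and $d(x,z)\le d(x,y)+d(y,z)$ (no symmetry). Topology $\tau_d$: neighbourhood base at $x$ given by $\{y:d(x,y)<r\}$, $r>0$; $x_n\to x$ iff $d(x,x_n)\to0$. A sequence $(x_n)$ is right $K$-Cauchy if for every $\varepsilon>0$ there is $n_\varepsilon$ with $d(x_{n+k},x_n)<\varepsilon$ for all $n\ge n_\varepsilon$, $k\in\mathbb{N}$; $X$ is sequentially right $K$-complete if every right $K$-Cauchy sequence converges. $\varphi$ is proper if finite somewhere; nearly lower semicontinuous if $\varphi(x)\le\liminf_n\varphi(x_n)$ for every sequence with pairwise distinct terms converging to $x$. *)

theory Defs
  imports "HOL-Analysis.Analysis"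
begin

definition quasi_pseudometric :: "'a set \<Rightarrow> ('a \<Rightarrow> 'a \<Rightarrow> real) \<Rightarrow> bool" where
  "quasi_pseudometric X d \<longleftrightarrow>
     (\<forall>x\<in>X. \<forall>y\<in>X. 0 \<le> d x y) \<and> (\<forall>x\<in>X. d x x = 0) \<and>
     (\<forall>x\<in>X. \<forall>y\<in>X. \<forall>z\<in>X. d x z \<le> d x y + d y z)"

definition qconv :: "('a \<Rightarrow> 'a \<Rightarrow> real) \<Rightarrow> (nat \<Rightarrow> 'a) \<Rightarrow> 'a \<Rightarrow> bool" where
  "qconv d s x \<longleftrightarrow> ((\<lambda>n. d x (s n)) \<longlongrightarrow> 0) sequentially"

definition right_K_Cauchy :: "('a \<Rightarrow> 'a \<Rightarrow> real) \<Rightarrow> (nat \<Rightarrow> 'a) \<Rightarrow> bool" where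
  "right_K_Cauchy d s \<longleftrightarrow>
     (\<forall>\<epsilon>>0. \<exists>N. \<forall>n\<ge>N. \<forall>k. d (s (n + k)) (s n) < \<epsilon>)"

definition seq_right_K_complete :: "'a set \<Rightarrow> ('a \<Rightarrow> 'a \<Rightarrow> real) \<Rightarrow> bool" where
  "seq_right_K_complete X d \<longleftrightarrow>
     (\<forall>s. range s \<subseteq> X \<longrightarrow> right_K_Cauchy d s \<longrightarrow> (\<exists>x\<in>X. qconv d s x))"

text \<open>Functions X -> R \<union> {\<infinity>}, represented as ereal-valued functions never equal to -\<infinity> on X.\<close>
definition proper_fun :: "'a set \<Rightarrow> ('a \<Rightarrow> ereal) \<Rightarrow> bool" where
  "proper_fun X \<phi> \<longleftrightarrow> (\<forall>x\<in>X. \<phi> x \<noteq> -\<infinity>) \<and> (\<exists>x\<in>X. \<phi> x \<noteq> \<infinity>)"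

definition bounded_below_fun :: "'a set \<Rightarrow> ('a \<Rightarrow> ereal) \<Rightarrow> bool" where
  "bounded_below_fun X \<phi> \<longleftrightarrow> (\<exists>c::real. \<forall>x\<in>X. ereal c \<le> \<phi> x)"

definition nearly_lsc :: "'a set \<Rightarrow> ('a \<Rightarrow> 'a \<Rightarrow> real) \<Rightarrow> ('a \<Rightarrow> ereal) \<Rightarrow> bool" where
  "nearly_lsc X d \<phi> \<longleftrightarrow>
     (\<forall>s x. range s \<subseteq> X \<longrightarrow> x \<in> X \<longrightarrow> inj s \<longrightarrow> qconv d s x \<longrightarrow>
        \<phi> x \<le> liminf (\<lambda>n. \<phi> (s n)))"

definition Sset :: "'a set \<Rightarrow> ('a \<Rightarrow> 'a \<Rightarrow> real) \<Rightarrow> ('a \<Rightarrow> ereal) \<Rightarrow> 'a \<Rightarrow> 'a set" where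
  "Sset X d \<phi> x = {y\<in>X. \<phi> y + ereal (d y x) \<le> \<phi> x}"

definition admissible :: "'a set \<Rightarrow> ('a \<Rightarrow> 'a \<Rightarrow> real) \<Rightarrow> ('a \<Rightarrow> ereal) \<Rightarrow> bool" where
  "admissible X d \<phi> \<longleftrightarrow> proper_fun X \<phi> \<and> bounded_below_fun X \<phi> \<and> nearly_lsc X d \<phi>"

end

theory Submission
  imports Defs
begin

(* If no point is stationary for S, pick x_{n+1} in S(x_n) with phi(x_{n+1}) nearly minimal on
   S(x_n). The finite, decreasing values phi(x_n) dominate d(x_{n+k}, x_n), so the sequence is
   right K-Cauchy; near lower semicontinuity puts its limit z in every S(x_n), and any strict
   descent from z then contradicts the near-minimality. This gives (1) => (2), and (2) implies
   (3) and (4) at once. Conversely, a non-convergent right K-Cauchy sequence has an injective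
   subsequence s with d(s_{j+1}, s_j) <= 2^-(j+1) and no accumulation point; phi(s_j) = 2^-j,
   phi = \<infinity> elsewhere, and the shift along s refute (3) and (4). *)

lemma Sset_subset: "Sset X d \<phi> x \<subseteq> X"
  by (auto simp: Sset_def)

lemma Sset_refl:
  assumes "quasi_pseudometric X d" "x \<in> X"
  shows "x \<in> Sset X d \<phi> x"
  using assms by (simp add: Sset_def quasi_pseudometric_def)

lemma Sset_le:
  assumes "quasi_pseudometric X d" "x \<in> X" "y \<in> Sset X d \<phi> x"
  shows "\<phi> y \<le> \<phi> x"
proof -
  have "y \<in> X" "\<phi> y + ereal (d y x) \<le> \<phi> x"
    using assms(3) by (auto simp: Sset_def)
  moreover have "0 \<le> d y x"
    using assms(1,2) \<open>y \<in> X\<close> by (simp add: quasi_pseudometric_def)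
  ultimately show ?thesis
    by (metis add_increasing2 order.refl ereal_less_eq(5) zero_ereal_def order.trans)
qed

lemma Sset_trans:
  assumes "quasi_pseudometric X d" "x \<in> X"
    and "y \<in> Sset X d \<phi> x" "z \<in> Sset X d \<phi> y"
  shows "z \<in> Sset X d \<phi> x"
proof -
  have X: "y \<in> X" "z \<in> X" using assms(3,4) by (auto simp: Sset_def)
  have "\<phi> z + ereal (d z x) \<le> \<phi> z + ereal (d z y + d y x)"
    using assms(1,2) X by (intro add_left_mono) (simp add: quasi_pseudometric_def)
  also have "\<dots> = (\<phi> z + ereal (d z y)) + ereal (d y x)"
    by (simp add: add.assoc)
  also have "\<dots> \<le> \<phi> y + ereal (d y x)"
    using assms(4) by (intro add_right_mono) (simp add: Sset_def)
  also have "\<dots> \<le> \<phi> x"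
    using assms(3) by (simp add: Sset_def)
  finally show ?thesis using X by (simp add: Sset_def)
qed

lemma right_K_Cauchy_if_potential:
  fixes a :: "nat \<Rightarrow> real"
  assumes "a \<longlonglongrightarrow> L" "\<And>n. L \<le> a n"
    and "\<And>n k. a (n + k) + d (s (n + k)) (s n) \<le> a n"
  shows "right_K_Cauchy d s"
  unfolding right_K_Cauchy_def
proof (intro allI impI)
  fix \<epsilon> :: real assume "\<epsilon> > 0"
  then obtain N where "\<forall>n\<ge>N. \<bar>a n - L\<bar> < \<epsilon>"
    using assms(1) by (auto simp: LIMSEQ_iff)
  then have "d (s (n + k)) (s n) < \<epsilon>" if "n \<ge> N" for n k
    using that assms(3)[of n k] assms(2)[of "n + k"] by fastforce
  then show "\<exists>N. \<forall>n\<ge>N. \<forall>k. d (s (n + k)) (s n) < \<epsilon>" by blast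
qed

lemma qconv_potential_bound:
  fixes a :: "nat \<Rightarrow> real"
  assumes "quasi_pseudometric X d" "range s \<subseteq> X" "z \<in> X" "qconv d s z"
    and "\<And>n k. a (n + k) + d (s (n + k)) (s n) \<le> a n" "a \<longlonglongrightarrow> L"
  shows "d z (s n) + L \<le> a n"
proof -
  have "(\<lambda>m. d z (s m) + (a n - a m)) \<longlonglongrightarrow> 0 + (a n - L)"
    using assms(4,6) unfolding qconv_def by (intro tendsto_intros)
  moreover have "d z (s n) \<le> d z (s m) + (a n - a m)" if "n \<le> m" for m
  proof -
    have "a m + d (s m) (s n) \<le> a n"
      using assms(5)[of n "m - n"] that by simp
    moreover have "d z (s n) \<le> d z (s m) + d (s m) (s n)"
      using assms(1-3) unfolding quasi_pseudometric_def by (simp add: range_subsetD)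
    ultimately show ?thesis by linarith
  qed
  ultimately have "d z (s n) \<le> 0 + (a n - L)"
    by (intro LIMSEQ_le_const) auto
  then show ?thesis by simp
qed

lemma Sset_descent_step:
  assumes "quasi_pseudometric X d" "bounded_below_fun X \<phi>" "x \<in> X"
    and "y \<in> Sset X d \<phi> x" "\<phi> y \<noteq> \<phi> x" "\<epsilon> > 0"
  shows "\<exists>y'\<in>Sset X d \<phi> x. \<phi> y' < \<phi> x \<and> \<phi> y' < (INF w\<in>Sset X d \<phi> x. \<phi> w) + ereal \<epsilon>"
proof -
  define m where "m = (INF w\<in>Sset X d \<phi> x. \<phi> w)"
  have "m \<le> \<phi> y" unfolding m_def using assms(4) by (rule INF_lower)
  also have "\<phi> y < \<phi> x" using Sset_le[OF assms(1,3,4)] assms(5) by simp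
  finally have "m < \<phi> x" .
  moreover obtain c where "\<forall>w\<in>X. ereal c \<le> \<phi> w"
    using assms(2) by (auto simp: bounded_below_fun_def)
  then have "ereal c \<le> m"
    unfolding m_def using Sset_subset by (meson INF_greatest subsetD)
  ultimately obtain r where "m = ereal r" by (cases m) auto
  then have "m < min (\<phi> x) (m + ereal \<epsilon>)"
    using \<open>m < \<phi> x\<close> assms(6) by simp
  then obtain y' where "y' \<in> Sset X d \<phi> x" "\<phi> y' < min (\<phi> x) (m + ereal \<epsilon>)"
    unfolding m_def by (subst (asm) INF_less_iff) blast
  then show ?thesis unfolding m_def by auto
qed

lemma Sset_chain:
  assumes "quasi_pseudometric X d" "\<And>n. x n \<in> X" "\<And>n. x (Suc n) \<in> Sset X d \<phi> (x n)"
  shows "x (n + k) \<in> Sset X d \<phi> (x n)"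
proof (induction k)
  case 0
  show ?case using Sset_refl[OF assms(1,2)] by simp
next
  case (Suc k)
  then show ?case using Sset_trans assms by (metis add_Suc_right)
qed

lemma Sset_descent_sequence_lower_bound:
  assumes qpm: "quasi_pseudometric X d" and complete: "seq_right_K_complete X d"
    and adm: "admissible X d \<phi>"
    and x: "\<And>n. x n \<in> X" "\<And>n. \<phi> (x n) \<noteq> \<infinity>"
    and descent: "\<And>n. x (Suc n) \<in> Sset X d \<phi> (x n)" "\<And>n. \<phi> (x (Suc n)) < \<phi> (x n)"
  shows "\<exists>z\<in>X. \<forall>n. z \<in> Sset X d \<phi> (x n)"
proof -
  define a where "a n = real_of_ereal (\<phi> (x n))" for n
  have \<phi>_a: "\<phi> (x n) = ereal (a n)" for n
    using adm x unfolding a_def admissible_def proper_fun_def by (cases "\<phi> (x n)") auto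
  have pot: "a (n + k) + d (x (n + k)) (x n) \<le> a n" for n k
    using Sset_chain[of X d x \<phi> n k, OF qpm x(1) descent(1)] by (simp add: Sset_def \<phi>_a)
  have a_less: "a (Suc n) < a n" for n
    using descent(2)[of n] by (simp add: \<phi>_a)
  obtain c where "\<forall>w\<in>X. ereal c \<le> \<phi> w"
    using adm by (auto simp: admissible_def bounded_below_fun_def)
  then have "c \<le> a n" for n using x(1)[of n] by (metis \<phi>_a ereal_less_eq(3))
  moreover have "decseq a" using a_less by (simp add: decseq_Suc_iff less_imp_le)
  ultimately obtain L where L: "a \<longlonglongrightarrow> L" "\<And>n. L \<le> a n"
    using decseq_convergent by blast
  have "right_K_Cauchy d x"
    using L pot by (rule right_K_Cauchy_if_potential)
  then obtain z where z: "z \<in> X" "qconv d x z"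
    using complete x(1) by (auto simp: seq_right_K_complete_def)
  have "strict_mono (\<lambda>n. - a n)" using a_less by (simp add: strict_mono_Suc_iff)
  then have "inj x"
    by (intro injI) (metis a_def strict_mono_eq)
  then have "\<phi> z \<le> liminf (\<lambda>n. \<phi> (x n))"
    using adm z x(1) by (auto simp: admissible_def nearly_lsc_def)
  also have "liminf (\<lambda>n. \<phi> (x n)) = ereal L"
    using L(1) by (intro lim_imp_Liminf) (simp_all add: \<phi>_a)
  finally have "\<phi> z + ereal (d z (x n)) \<le> \<phi> (x n)" for n
  proof -
    assume "\<phi> z \<le> ereal L"
    then have "\<phi> z + ereal (d z (x n)) \<le> ereal (L + d z (x n))"
      by (metis add_right_mono plus_ereal.simps(1))
    also have "\<dots> \<le> \<phi> (x n)"
      using qconv_potential_bound[OF qpm _ z(1,2) pot L(1), of n] x(1)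
      by (simp add: \<phi>_a image_subset_iff add.commute)
    finally show ?thesis .
  qed
  then show ?thesis using z(1) by (auto simp: Sset_def)
qed

lemma exists_Sset_descent_sequence:
  assumes qpm: "quasi_pseudometric X d" and adm: "admissible X d \<phi>"
    and moves: "\<And>z. z \<in> X \<Longrightarrow> \<exists>y\<in>Sset X d \<phi> z. \<phi> y \<noteq> \<phi> z"
  obtains x where "\<And>n. x n \<in> X" "\<And>n. \<phi> (x n) \<noteq> \<infinity>"
    "\<And>n. x (Suc n) \<in> Sset X d \<phi> (x n)" "\<And>n. \<phi> (x (Suc n)) < \<phi> (x n)"
    "\<And>n. \<phi> (x (Suc n)) < (INF w\<in>Sset X d \<phi> (x n). \<phi> w) + ereal ((1/2)^n)"
proof -
  define P where "P n v \<longleftrightarrow> v \<in> X \<and> \<phi> v \<noteq> \<infinity>" for n :: nat and v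
  define Q where "Q n v w \<longleftrightarrow> w \<in> Sset X d \<phi> v \<and> \<phi> w < \<phi> v \<and>
    \<phi> w < (INF u\<in>Sset X d \<phi> v. \<phi> u) + ereal ((1/2)^n)" for n v w
  have "\<exists>x. \<forall>n. P n (x n) \<and> Q n (x n) (x (Suc n))"
  proof (rule dependent_nat_choice)
    show "\<exists>v. P 0 v" using adm by (auto simp: P_def admissible_def proper_fun_def)
  next
    fix v n assume "P n v"
    then have v: "v \<in> X" "\<phi> v \<noteq> \<infinity>" by (simp_all add: P_def)
    obtain y where y: "y \<in> Sset X d \<phi> v" "\<phi> y \<noteq> \<phi> v" using moves v(1) by blast
    have "bounded_below_fun X \<phi>" using adm by (simp add: admissible_def)
    then obtain w where "Q n v w"
      using Sset_descent_step[OF qpm _ v(1) y, of "(1/2)^n"] unfolding Q_def by auto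
    moreover have "P (Suc n) w" using \<open>Q n v w\<close> Sset_subset unfolding P_def Q_def by fastforce
    ultimately show "\<exists>w. P (Suc n) w \<and> Q n v w" by blast
  qed
  then show thesis using that unfolding P_def Q_def by blast
qed

lemma complete_imp_exists_Sset_stationary:
  assumes qpm: "quasi_pseudometric X d" and complete: "seq_right_K_complete X d"
    and adm: "admissible X d \<phi>"
  shows "\<exists>z\<in>X. \<forall>y\<in>Sset X d \<phi> z. \<phi> y = \<phi> z"
proof (rule ccontr)
  assume "\<not> ?thesis"
  then have moves: "\<And>z. z \<in> X \<Longrightarrow> \<exists>y\<in>Sset X d \<phi> z. \<phi> y \<noteq> \<phi> z" by blast
  obtain x where x: "\<And>n. x n \<in> X" "\<And>n. \<phi> (x n) \<noteq> \<infinity>"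
    and descent: "\<And>n. x (Suc n) \<in> Sset X d \<phi> (x n)" "\<And>n. \<phi> (x (Suc n)) < \<phi> (x n)"
    and near_inf: "\<And>n. \<phi> (x (Suc n)) < (INF w\<in>Sset X d \<phi> (x n). \<phi> w) + ereal ((1/2)^n)"
    using exists_Sset_descent_sequence[OF qpm adm moves] by blast
  obtain z where z: "z \<in> X" "\<And>n. z \<in> Sset X d \<phi> (x n)"
    using Sset_descent_sequence_lower_bound[of X d \<phi> x, OF qpm complete adm x descent] by blast
  obtain y where y: "y \<in> Sset X d \<phi> z" "\<phi> y \<noteq> \<phi> z" using moves z(1) by blast
  have "\<phi> y < \<phi> z" using Sset_le[OF qpm z(1) y(1)] y(2) by simp
  moreover have "\<phi> z \<le> \<phi> y"
  proof (rule ereal_le_epsilon2)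
    fix \<epsilon> :: real assume "0 < \<epsilon>"
    then obtain n where n: "(1/2::real)^n < \<epsilon>" using real_arch_pow_inv[of \<epsilon> "1/2"] by auto
    have "\<phi> z \<le> \<phi> (x (Suc n))" using Sset_le[OF qpm x(1) z(2)] .
    also have "\<dots> < (INF w\<in>Sset X d \<phi> (x n). \<phi> w) + ereal ((1/2)^n)" by (rule near_inf)
    also have "\<dots> \<le> \<phi> y + ereal \<epsilon>"
      using Sset_trans[OF qpm x(1) z(2) y(1)] n
      by (intro add_mono INF_lower) simp_all
    finally show "\<phi> z \<le> \<phi> y + ereal \<epsilon>" by simp
  qed
  ultimately show False by simp
qed

definition no_seq_accumulation_point :: "'a set \<Rightarrow> ('a \<Rightarrow> 'a \<Rightarrow> real) \<Rightarrow> 'a set \<Rightarrow> bool" where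
  "no_seq_accumulation_point X d A \<longleftrightarrow>
     (\<forall>x\<in>X. \<forall>y. inj y \<longrightarrow> qconv d y x \<longrightarrow> (\<forall>\<^sub>F m in sequentially. y m \<notin> A))"

lemma no_seq_accumulation_point_subset:
  "no_seq_accumulation_point X d A \<Longrightarrow> B \<subseteq> A \<Longrightarrow> no_seq_accumulation_point X d B"
  unfolding no_seq_accumulation_point_def by (blast intro: eventually_mono)

lemma nearly_lsc_if_infinite_outside:
  assumes "no_seq_accumulation_point X d A" "\<And>y. y \<in> X \<Longrightarrow> y \<notin> A \<Longrightarrow> \<phi> y = \<infinity>"
  shows "nearly_lsc X d \<phi>"
  unfolding nearly_lsc_def
proof (intro allI impI)
  fix y x assume "range y \<subseteq> X" "x \<in> X" "inj y" "qconv d y x"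
  then have "\<forall>\<^sub>F m in sequentially. \<phi> (y m) = \<infinity>"
    using assms unfolding no_seq_accumulation_point_def by (fast elim: eventually_mono)
  then have "liminf (\<lambda>m. \<phi> (y m)) = \<infinity>"
    by (intro lim_imp_Liminf tendsto_eventually) simp_all
  then show "\<phi> x \<le> liminf (\<lambda>m. \<phi> (y m))" by simp
qed

lemma qconv_if_frequently_near:
  assumes qpm: "quasi_pseudometric X d" and t: "range t \<subseteq> X" "right_K_Cauchy d t"
    and "x \<in> X" and near: "\<And>\<epsilon> n. \<epsilon> > 0 \<Longrightarrow> \<exists>m\<ge>n. d x (t m) < \<epsilon>"
  shows "qconv d t x"
  unfolding qconv_def LIMSEQ_iff
proof (intro allI impI)
  fix \<epsilon> :: real assume "\<epsilon> > 0"
  then obtain N where N: "\<And>n k. n \<ge> N \<Longrightarrow> d (t (n + k)) (t n) < \<epsilon>/2"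
    using t(2) unfolding right_K_Cauchy_def by (meson half_gt_zero)
  have "\<bar>d x (t n)\<bar> < \<epsilon>" if "n \<ge> N" for n
  proof -
    obtain m where m: "m \<ge> n" "d x (t m) < \<epsilon>/2" using near \<open>\<epsilon> > 0\<close> by (meson half_gt_zero)
    have "d (t m) (t n) < \<epsilon>/2" using N[OF that, of "m - n"] m(1) by simp
    moreover have "0 \<le> d x (t n)" "d x (t n) \<le> d x (t m) + d (t m) (t n)"
      using qpm \<open>x \<in> X\<close> t(1) unfolding quasi_pseudometric_def by (simp_all add: range_subsetD)
    ultimately show ?thesis using m(2) by linarith
  qed
  then show "\<exists>N. \<forall>n\<ge>N. norm (d x (t n) - 0) < \<epsilon>" by auto
qed

lemma eventually_avoids_finite_if_not_qconv:
  assumes qpm: "quasi_pseudometric X d" and t: "range t \<subseteq> X" "right_K_Cauchy d t"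
    and no_lim: "\<not> (\<exists>x\<in>X. qconv d t x)" and "finite F"
  shows "\<forall>\<^sub>F m in sequentially. t m \<notin> F"
proof -
  have "\<forall>\<^sub>F m in sequentially. t m \<noteq> a" for a
  proof (rule ccontr)
    assume "\<not> ?thesis"
    then have often: "\<exists>m\<ge>n. t m = a" for n
      by (auto simp: not_eventually frequently_sequentially)
    then have "a \<in> X" using t(1) by blast
    moreover have "d a a = 0" using qpm \<open>a \<in> X\<close> by (simp add: quasi_pseudometric_def)
    ultimately have "qconv d t a"
      using often by (intro qconv_if_frequently_near[OF qpm t]) force+
    then show False using no_lim \<open>a \<in> X\<close> by blast
  qed
  then have "\<forall>\<^sub>F m in sequentially. \<forall>a\<in>F. t m \<noteq> a"
    using \<open>finite F\<close> by (simp add: eventually_ball_finite)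
  then show ?thesis by (rule eventually_mono) blast
qed

lemma no_seq_accumulation_point_range_if_not_qconv:
  assumes qpm: "quasi_pseudometric X d" and t: "range t \<subseteq> X" "right_K_Cauchy d t"
    and no_lim: "\<not> (\<exists>x\<in>X. qconv d t x)"
  shows "no_seq_accumulation_point X d (range t)"
  unfolding no_seq_accumulation_point_def
proof (intro ballI allI impI)
  fix x y assume x: "x \<in> X" and y: "inj y" "qconv d y x"
  show "\<forall>\<^sub>F m in sequentially. y m \<notin> range t"
  proof (rule ccontr)
    assume "\<not> ?thesis"
    then have often: "\<exists>\<^sub>F m in sequentially. y m \<in> range t" by (simp add: not_eventually)
    have "qconv d t x"
    proof (rule qconv_if_frequently_near[OF qpm t x])
      fix \<epsilon> :: real and n assume "\<epsilon> > 0"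
      then have close: "\<forall>\<^sub>F m in sequentially. d x (y m) < \<epsilon>"
        using y(2) unfolding qconv_def by (auto dest: order_tendstoD(2))
      have "finite (y -` t ` {..<n})"
        using y(1) by (simp add: finite_vimageI)
      then have late: "\<forall>\<^sub>F m in sequentially. y m \<notin> t ` {..<n}"
        by (simp add: cofinite_eq_sequentially[symmetric] eventually_cofinite vimage_def)
      have "\<exists>\<^sub>F m in sequentially. y m \<in> range t \<and> d x (y m) < \<epsilon> \<and> y m \<notin> t ` {..<n}"
        using frequently_eventually_frequently[OF often eventually_conj[OF close late]] .
      then obtain m k where "y m = t k" "d x (t k) < \<epsilon>" "t k \<notin> t ` {..<n}"
        by (auto dest: frequently_ex)
      then show "\<exists>k\<ge>n. d x (t k) < \<epsilon>" by (metis image_eqI lessThan_iff not_le)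
    qed
    then show False using no_lim x by blast
  qed
qed

lemma not_complete_imp_sparse_sequence:
  assumes qpm: "quasi_pseudometric X d" and "\<not> seq_right_K_complete X d"
  obtains s where "range s \<subseteq> X" "inj s" "\<And>j. d (s (Suc j)) (s j) \<le> (1/2)^Suc j"
    "no_seq_accumulation_point X d (range s)"
proof -
  obtain t where t: "range t \<subseteq> X" "right_K_Cauchy d t" and no_lim: "\<not> (\<exists>x\<in>X. qconv d t x)"
    using assms(2) by (auto simp: seq_right_K_complete_def)
  obtain N where N: "\<And>\<epsilon> n k. \<epsilon> > 0 \<Longrightarrow> n \<ge> N \<epsilon> \<Longrightarrow> d (t (n + k)) (t n) < \<epsilon>"
    using t(2) unfolding right_K_Cauchy_def by metis
  have "\<exists>M. \<forall>m\<ge>M. t m \<notin> t ` {..n}" for n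
    using eventually_avoids_finite_if_not_qconv[OF qpm t no_lim, of "t ` {..n}"]
    by (simp add: eventually_sequentially)
  then obtain M where M: "\<And>n m. m \<ge> M n \<Longrightarrow> t m \<notin> t ` {..n}" by metis
  have "\<exists>r. \<forall>j. N ((1/2)^Suc j) \<le> r j \<and> r j < r (Suc j) \<and> M (r j) \<le> r (Suc j)"
  proof (rule dependent_nat_choice)
    fix i j assume "N ((1/2)^Suc j) \<le> i"
    show "\<exists>i'. N ((1/2)^Suc (Suc j)) \<le> i' \<and> i < i' \<and> M i \<le> i'"
      by (rule exI[of _ "max (Suc i) (max (M i) (N ((1/2)^Suc (Suc j))))"]) auto
  qed auto
  then obtain r where r: "\<And>j. N ((1/2)^Suc j) \<le> r j" "\<And>j. r j < r (Suc j)"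
    "\<And>j. M (r j) \<le> r (Suc j)" by blast
  have mono: "strict_mono r" using r(2) by (simp add: strict_mono_Suc_iff)
  define s where "s = t \<circ> r"
  have "range s \<subseteq> X" using t(1) by (auto simp: s_def)
  moreover have "s i \<noteq> s j" if "i < j" for i j
  proof -
    have "M (r i) \<le> r j"
      using r(3)[of i] strict_mono_less_eq[OF mono, of "Suc i" j] that by simp
    then have "t (r j) \<notin> t ` {..r i}" by (rule M)
    then show ?thesis by (metis atMost_iff comp_apply image_eqI order_refl s_def)
  qed
  then have "inj s" by (metis injI linorder_neqE_nat)
  moreover have "d (s (Suc j)) (s j) \<le> (1/2)^Suc j" for j
    using N[OF _ r(1)[of j], of "r (Suc j) - r j"] less_imp_le[OF r(2)[of j]] by (simp add: s_def)
  moreover have "no_seq_accumulation_point X d (range s)"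
    using no_seq_accumulation_point_range_if_not_qconv[OF qpm t no_lim]
    by (rule no_seq_accumulation_point_subset) (auto simp: s_def)
  ultimately show thesis using that by blast
qed

lemma not_complete_imp_strict_descent_counterexample:
  assumes qpm: "quasi_pseudometric X d" and "\<not> seq_right_K_complete X d"
  obtains \<phi> T where "admissible X d \<phi>"
    "\<And>x. x \<in> X \<Longrightarrow> T x \<in> Sset X d \<phi> x" "\<And>x. x \<in> X \<Longrightarrow> \<phi> (T x) < \<phi> x"
    "\<And>x. x \<in> X \<Longrightarrow> (INF w\<in>X. \<phi> w) < \<phi> x"
proof -
  obtain s where s: "range s \<subseteq> X" "inj s" "\<And>j. d (s (Suc j)) (s j) \<le> (1/2)^Suc j"
    "no_seq_accumulation_point X d (range s)"
    using not_complete_imp_sparse_sequence[OF assms] by blast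
  define \<phi> where "\<phi> y = (if y \<in> range s then ereal ((1/2)^inv s y) else \<infinity>)" for y
  define T where "T y = (if y \<in> range s then s (Suc (inv s y)) else s 0)" for y
  have \<phi>_s: "\<phi> (s j) = ereal ((1/2)^j)" for j using s(2) by (simp add: \<phi>_def)
  have T_s: "T (s j) = s (Suc j)" for j using s(2) by (simp add: T_def)
  have pos: "0 < \<phi> y" for y by (simp add: \<phi>_def)
  have "admissible X d \<phi>"
    unfolding admissible_def proper_fun_def bounded_below_fun_def
  proof (intro conjI)
    show "\<forall>x\<in>X. \<phi> x \<noteq> -\<infinity>" by (simp add: \<phi>_def)
    show "\<exists>x\<in>X. \<phi> x \<noteq> \<infinity>"
      using s(1) by (intro bexI[of _ "s 0"]) (simp_all add: \<phi>_s range_subsetD)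
    show "\<exists>c. \<forall>x\<in>X. ereal c \<le> \<phi> x" using pos by (metis less_imp_le zero_ereal_def)
    show "nearly_lsc X d \<phi>" using s(4) by (rule nearly_lsc_if_infinite_outside) (simp add: \<phi>_def)
  qed
  moreover have "T x \<in> Sset X d \<phi> x \<and> \<phi> (T x) < \<phi> x" if "x \<in> X" for x
  proof (cases "x \<in> range s")
    case True
    then obtain j where j: "x = s j" by blast
    have "(1/2)^Suc j + d (s (Suc j)) (s j) \<le> (1/2::real)^j" using s(3)[of j] by simp
    then show ?thesis using j s(1) by (simp add: Sset_def \<phi>_s T_s range_subsetD)
  next
    case False
    then show ?thesis using that s(1) by (simp add: Sset_def T_def \<phi>_def range_subsetD)
  qed
  moreover have "(INF w\<in>X. \<phi> w) \<le> 0"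
  proof (rule LIMSEQ_le_const)
    show "(\<lambda>j. ereal ((1/2)^j)) \<longlonglongrightarrow> 0"
      by (simp add: zero_ereal_def LIMSEQ_power_zero)
    show "\<exists>N. \<forall>j\<ge>N. (INF w\<in>X. \<phi> w) \<le> ereal ((1/2)^j)"
      using s(1) by (metis INF_lower \<phi>_s range_subsetD)
  qed
  ultimately show thesis using that pos by (meson order_le_less_trans)
qed

theorem theorem3p9:
  fixes X :: "'a set" and d :: "'a \<Rightarrow> 'a \<Rightarrow> real"
  assumes "quasi_pseudometric X d"
  defines "P1 \<equiv> seq_right_K_complete X d"
      and "P2 \<equiv> (\<forall>\<phi>. admissible X d \<phi> \<longrightarrow>
                    (\<exists>z\<in>X. \<forall>x\<in>Sset X d \<phi> z. \<phi> x = \<phi> z))"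
      and "P3 \<equiv> (\<forall>\<phi>. admissible X d \<phi> \<longrightarrow>
                    (\<forall>x\<in>X. \<phi> x > (INF w\<in>X. \<phi> w) \<longrightarrow>
                        (\<exists>y\<in>Sset X d \<phi> x. \<phi> y < \<phi> x)) \<longrightarrow>
                    (\<exists>z\<in>X. \<phi> z = (INF w\<in>X. \<phi> w)))"
      and "P4 \<equiv> (\<forall>\<phi> T. admissible X d \<phi> \<longrightarrow>
                    (\<forall>x\<in>X. T x \<in> Sset X d \<phi> x) \<longrightarrow>
                    (\<exists>z\<in>X. \<phi> (T z) = \<phi> z))"
  shows "(P1 \<longleftrightarrow> P2) \<and> (P1 \<longleftrightarrow> P3) \<and> (P1 \<longleftrightarrow> P4)"
proof -
  have "P1 \<Longrightarrow> P2"
    unfolding P1_def P2_def using complete_imp_exists_Sset_stationary[OF assms(1)] by blast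
  moreover have "P2 \<Longrightarrow> P3"
    unfolding P2_def P3_def by (metis INF_lower order_less_le)
  moreover have "P2 \<Longrightarrow> P4"
    unfolding P2_def P4_def by blast
  moreover have "\<not> P3 \<and> \<not> P4" if incomplete: "\<not> P1"
  proof -
    obtain \<phi> T where "admissible X d \<phi>"
      "\<And>x. x \<in> X \<Longrightarrow> T x \<in> Sset X d \<phi> x" "\<And>x. x \<in> X \<Longrightarrow> \<phi> (T x) < \<phi> x"
      "\<And>x. x \<in> X \<Longrightarrow> (INF w\<in>X. \<phi> w) < \<phi> x"
      using not_complete_imp_strict_descent_counterexample[OF assms(1) incomplete[unfolded P1_def]]
      by blast
    then show ?thesis unfolding P3_def P4_def by (metis order_less_irrefl)
  qed
  ultimately show ?thesis by blast
qed

end
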